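(* Let $\Omega$ be a set, $G=S_\Omega$, $H\subseteq G$ any set of permutations, and $\mathcal Q$ a second-order structure on $\Omega$. (1) A first-order or second-order relation $Q$ on $\Omega$ (of finite type) belongs to $\mathrm{Inv}(\mathrm{Aut}(\mathcal Q))$ if and only if $Q$ is definable in $\mathscr L_{\infty\infty}(\mathcal Q)$. (2) $\mathrm{Aut}(\mathrm{Inv}(H))$ is the smallest subgroup of $G$ including $H$.
   Context: A (finite) second-order relation of type $(i_1,\dots,i_k)$ on $\Omega$ is a subset of $\mathcal P(\Omega^{i_1})\times\cdots\times\mathcal P(\Omega^{i_k})$ with $k,i_1,\dots,i_k$ finite; a first-order relation is a subset of $\Omega^n$, $n$ finite. A second-order structure on $\Omega$ is a set of first-order and second-order relations of this kind. A permutation $g$ preserves a first-order relation $R$ if $gR=R$, and preserves a second-order relation $Q$ of type $(i_1,\dots,i_k)$ if for all $R_j\subseteq\Omega^{i_j}$: $(R_1,\dots,R_k)\in Q$ iff $(gR_1,\dots,gR_k)\in Q$. $\mathrm{Aut}(\mathcal Q)$ is the set of permutations of $\Omega$ preserving every member of $\mathcal Q$; $\mathrm{Inv}(H)$ is the set of all (finite-type) first-order and second-order relations on $\Omega$ preserved by every $h\in H$. $\mathscr L_{\infty\infty}(\mathcal Q)$ is the infinitary logic with equality (arbitrary conjunctions and disjunctions, quantification over arbitrary sequences of variables) with a predicate symbol for each first-order relation of $\mathcal Q$ and a generalized quantifier symbol for each second-order relation of $\mathcal Q$, interpreted on $\Omega$ in the standard Lindström way: for $Q$ of type $(i_1,\dots,i_k)$,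 $\bar Q\,\bar x_1\dots\bar x_k(\phi_1,\dots,\phi_k)$ holds under an assignment iff $(\|\phi_1\|,\dots,\|\phi_k\|)\in Q$, where $\|\phi_j\|$ is the set of $i_j$-tuples satisfying $\phi_j$ in the variables $\bar x_j$. A first-order relation $R\subseteq\Omega^n$ is definable in $\mathscr L_{\infty\infty}(\mathcal Q)$ if some formula $\phi(x_1,\dots,x_n)$ (without parameters) defines it in $(\Omega,\mathcal Q)$. A second-order relation $Q$ of type $(i_1,\dots,i_k)$ is definable in $\mathscr L_{\infty\infty}(\mathcal Q)$ if there is a sentence $\phi(\bar R_1,\dots,\bar R_k)$ of $\mathscr L_{\infty\infty}(\mathcal Q)$ expanded by new predicate symbols $\bar R_j$ of arity $i_j$ such that for all $R_j\subseteq\Omega^{i_j}$: $(\Omega,\mathcal Q,R_1,\dots,R_k)\models\phi$ iff $(R_1,\dots,R_k)\in Q$. *)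

theory Defs
  imports Main "HOL-Algebra.Bij"
begin

text \<open>An n-tuple is a list of length n.  A first-order relation is given by its
arity n and a set of n-tuples; a second-order relation of type (i_1,...,i_k) is given
by the list [i_1,...,i_k] and a set of k-lists [R_1,...,R_k] with R_j a set of i_j-tuples.\<close>

datatype 'a rel =
    FO nat "'a list set"
  | SO "nat list" "'a list set list set"

definition typed_args :: "nat list \<Rightarrow> 'a list set list \<Rightarrow> bool" where
  "typed_args ts Rs \<longleftrightarrow> length Rs = length ts \<and>
     (\<forall>j < length ts. \<forall>t \<in> Rs ! j. length t = ts ! j)"

fun wf_rel :: "'a rel \<Rightarrow> bool" where
  "wf_rel (FO n R) \<longleftrightarrow> (\<forall>t \<in> R. length t = n)"
| "wf_rel (SO ts Q) \<longleftrightarrow> (\<forall>Rs \<in> Q. typed_args ts Rs)"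

definition act :: "('a \<Rightarrow> 'a) \<Rightarrow> 'a list set \<Rightarrow> 'a list set" where
  "act g R = map g ` R"

fun preserves :: "('a \<Rightarrow> 'a) \<Rightarrow> 'a rel \<Rightarrow> bool" where
  "preserves g (FO n R) \<longleftrightarrow> act g R = R"
| "preserves g (SO ts Q) \<longleftrightarrow>
     (\<forall>Rs. typed_args ts Rs \<longrightarrow> (Rs \<in> Q \<longleftrightarrow> map (act g) Rs \<in> Q))"

definition Aut :: "'a rel set \<Rightarrow> ('a \<Rightarrow> 'a) set" where
  "Aut \<Q> = {g. bij g \<and> (\<forall>q \<in> \<Q>. preserves g q)}"

definition Inv :: "('a \<Rightarrow> 'a) set \<Rightarrow> 'a rel set" where
  "Inv H = {q. wf_rel q \<and> (\<forall>h \<in> H. preserves h q)}"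

text \<open>Relation symbols and quantifier symbols are the relations of
Q themselves.  NewR j xs is the j-th new predicate symbol (used for
definability of second-order relations).  GQ q xss phis is the Lindstroem quantifier of q binding the
tuple xss!j in phis!j.\<close>

datatype ('v, 'i, 'a) fm =
    Eq 'v 'v
  | Atom "'a rel" "'v list"
  | NewR nat "'v list"
  | Neg "('v, 'i, 'a) fm"
  | Conj "'i set" "'i \<Rightarrow> ('v, 'i, 'a) fm"
  | Disj "'i set" "'i \<Rightarrow> ('v, 'i, 'a) fm"
  | Ex "'v set" "('v, 'i, 'a) fm"
  | All "'v set" "('v, 'i, 'a) fm"
  | GQ "'a rel" "'v list list" "('v, 'i, 'a) fm list"

primrec wf_fm :: "'a rel set \<Rightarrow> nat list \<Rightarrow> ('v, 'i, 'a) fm \<Rightarrow> bool" where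
  "wf_fm \<Q> ar (Eq x y) = True"
| "wf_fm \<Q> ar (Atom q xs) = (q \<in> \<Q> \<and> (\<exists>R. q = FO (length xs) R))"
| "wf_fm \<Q> ar (NewR j xs) = (j < length ar \<and> length xs = ar ! j)"
| "wf_fm \<Q> ar (Neg \<phi>) = wf_fm \<Q> ar \<phi>"
| "wf_fm \<Q> ar (Conj I f) = (\<forall>i \<in> I. wf_fm \<Q> ar (f i))"
| "wf_fm \<Q> ar (Disj I f) = (\<forall>i \<in> I. wf_fm \<Q> ar (f i))"
| "wf_fm \<Q> ar (Ex X \<phi>) = wf_fm \<Q> ar \<phi>"
| "wf_fm \<Q> ar (All X \<phi>) = wf_fm \<Q> ar \<phi>"
| "wf_fm \<Q> ar (GQ q xss \<phi>s) =
     (let bs = map (\<lambda>\<phi>. wf_fm \<Q> ar \<phi>) \<phi>s in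
      q \<in> \<Q> \<and> (\<exists>Q. q = SO (map length xss) Q) \<and> length bs = length xss \<and>
      (\<forall>xs \<in> set xss. distinct xs) \<and> (\<forall>b \<in> set bs. b))"

definition assign :: "('v \<Rightarrow> 'a) \<Rightarrow> 'v list \<Rightarrow> 'a list \<Rightarrow> 'v \<Rightarrow> 'a" where
  "assign v xs t = fold (\<lambda>(x, a) w. w(x := a)) (zip xs t) v"

primrec sat :: "'a list set list \<Rightarrow> ('v \<Rightarrow> 'a) \<Rightarrow> ('v, 'i, 'a) fm \<Rightarrow> bool" where
  "sat Rs v (Eq x y) = (v x = v y)"
| "sat Rs v (Atom q xs) = (case q of FO n R \<Rightarrow> map v xs \<in> R | SO ts Q \<Rightarrow> False)"
| "sat Rs v (NewR j xs) = (j < length Rs \<and> map v xs \<in> Rs ! j)"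
| "sat Rs v (Neg \<phi>) = (\<not> sat Rs v \<phi>)"
| "sat Rs v (Conj I f) = (\<forall>i \<in> I. sat Rs v (f i))"
| "sat Rs v (Disj I f) = (\<exists>i \<in> I. sat Rs v (f i))"
| "sat Rs v (Ex X \<phi>) = (\<exists>w. (\<forall>u. u \<notin> X \<longrightarrow> w u = v u) \<and> sat Rs w \<phi>)"
| "sat Rs v (All X \<phi>) = (\<forall>w. (\<forall>u. u \<notin> X \<longrightarrow> w u = v u) \<longrightarrow> sat Rs w \<phi>)"
| "sat Rs v (GQ q xss \<phi>s) =
     (case q of FO n R \<Rightarrow> False
      | SO ts Q \<Rightarrow>
          map (\<lambda>(xs, P). {t. length t = length xs \<and> P (assign v xs t)})
            (zip xss (map (\<lambda>\<phi> w. sat Rs w \<phi>) \<phi>s)) \<in> Q)"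

text \<open>A first-order relation R of arity n is defined by phi(x_1..x_n)
(distinct variables, no other free variables, no parameters); a second-order relation
of type ts is defined by a sentence of the language expanded by new predicate symbols
of arities ts.  "No further free variables / sentence" is expressed semantically: truth
depends only on the listed variables (resp. on no variable).\<close>

fun definable :: "'a rel set \<Rightarrow> 'a rel \<Rightarrow> ('v, 'i, 'a) fm \<Rightarrow> bool" where
  "definable \<Q> (FO n R) \<phi> \<longleftrightarrow> wf_fm \<Q> [] \<phi> \<and>
     (\<exists>xs. distinct xs \<and> length xs = n \<and> (\<forall>v. sat [] v \<phi> \<longleftrightarrow> map v xs \<in> R))"
| "definable \<Q> (SO ts Q) \<phi> \<longleftrightarrow> wf_fm \<Q> ts \<phi> \<and>
     (\<forall>Rs v. typed_args ts Rs \<longrightarrow> (sat Rs v \<phi> \<longleftrightarrow> Rs \<in> Q))"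

definition L_inf_definable ::
  "'v itself \<Rightarrow> 'i itself \<Rightarrow> 'a rel set \<Rightarrow> 'a rel \<Rightarrow> bool" where
  "L_inf_definable TYPE('v) TYPE('i) \<Q> q \<longleftrightarrow> (\<exists>\<phi> :: ('v, 'i, 'a) fm. definable \<Q> q \<phi>)"

abbreviation Sym :: "('a \<Rightarrow> 'a) monoid" where
  "Sym \<equiv> BijGroup (UNIV :: 'a set)"

end

theory Submission
  imports Defs
begin

text \<open>
  Part (2): Aut (Inv H) contains H and is a group, so it contains the generated subgroup.
  Conversely, for a subgroup K containing H and a well-order r of \<Omega>, the orbit of r
  under K, viewed as a second-order relation of type (2), is invariant under H.  An
  automorphism g of Inv H therefore maps r to h r for some h in K; then h\<inverse> g is an
  automorphism of a well-order, hence the identity, and g = h lies in K.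

  Part (1): satisfaction in L_{\<infinity>\<infinity>}(\<Q>) is invariant under every automorphism of \<Q>
  (induction on formulas), so definable relations are invariant.  Conversely, name every
  element a by a variable ve a.  A single infinitary formula aut_fm \<Q> states that the
  map w \<circ> ve read off an assignment w is an automorphism of \<Q> (its diagram with respect
  to all relations and quantifiers of \<Q>).  An invariant relation is then defined by
  "for some automorphism, the arguments are the image of a member of the relation";
  invariance makes this formula exact.  The formulas need index sets and variables of
  the sizes provided by the hypotheses on the types 'i and 'v.
\<close>

unbundle no m_inv_syntax \<comment> \<open>inv denotes the inverse function, not the group inverse\<close>

lemma carrier_Sym: "carrier (Sym :: ('a \<Rightarrow> 'a) monoid) = {f. bij f}"
  by (auto simp: BijGroup_def Bij_def)

lemma mult_Sym: "bij f \<Longrightarrow> bij g \<Longrightarrow> f \<otimes>\<^bsub>(Sym :: ('a \<Rightarrow> 'a) monoid)\<^esub> g = f \<circ> g"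
  by (auto simp: BijGroup_def Bij_def compose_def)

lemma one_Sym: "\<one>\<^bsub>(Sym :: ('a \<Rightarrow> 'a) monoid)\<^esub> = id"
  by (auto simp: BijGroup_def)

lemma inv_Sym: "bij f \<Longrightarrow> m_inv (Sym :: ('a \<Rightarrow> 'a) monoid) f = inv f"
  by (subst inv_BijGroup) (auto simp: Bij_def)

lemma subgroup_SymD:
  assumes "subgroup K (Sym :: ('a \<Rightarrow> 'a) monoid)"
  shows subgroup_Sym_bij: "h \<in> K \<Longrightarrow> bij h"
    and subgroup_Sym_comp: "g \<in> K \<Longrightarrow> h \<in> K \<Longrightarrow> g \<circ> h \<in> K"
    and subgroup_Sym_inv: "h \<in> K \<Longrightarrow> inv h \<in> K"
    and subgroup_Sym_id: "id \<in> K"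
proof -
  show bK: "h \<in> K \<Longrightarrow> bij h" for h
    using subgroup.subset[OF assms] by (auto simp: carrier_Sym)
  show "g \<in> K \<Longrightarrow> h \<in> K \<Longrightarrow> g \<circ> h \<in> K"
    using subgroup.m_closed[OF assms] by (simp add: mult_Sym bK)
  show "h \<in> K \<Longrightarrow> inv h \<in> K"
    using subgroup.m_inv_closed[OF assms] by (simp add: inv_Sym bK)
  show "id \<in> K"
    using subgroup.one_closed[OF assms] by (simp add: one_Sym)
qed

lemma act_comp: "act (f \<circ> g) = act f \<circ> act g"
  by (auto simp: act_def image_image fun_eq_iff)

lemma act_id [simp]: "act id = (\<lambda>R. R)"
  by (simp add: act_def fun_eq_iff)

lemma act_inv_act: "bij g \<Longrightarrow> act (inv g) (act g R) = R"
  by (metis act_comp act_id bij_is_inj comp_apply inv_o_cancel)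

lemma act_act_inv: "bij g \<Longrightarrow> act g (act (inv g) R) = R"
  by (metis act_comp act_id bij_is_surj comp_apply surj_iff)

lemma map_act_act_inv: "bij g \<Longrightarrow> map (act g) (map (act (inv g)) Rs) = Rs"
  by (induct Rs) (simp_all add: act_act_inv)

lemma map_in_act: "inj g \<Longrightarrow> map g s \<in> act g R \<longleftrightarrow> s \<in> R"
  by (simp add: act_def inj_image_mem_iff inj_mapI)

lemma typed_args_act [simp]: "typed_args ts (map (act g) Rs) = typed_args ts Rs"
  by (auto simp: typed_args_def act_def)

text \<open>A bijection fixes a first-order relation iff it preserves membership of every
  tuple of the right length; this is how a fixed point is expressed by formulas.\<close>

lemma act_fixed_iff:
  assumes b: "bij h" and len: "\<forall>t \<in> R. length t = m"
  shows "act h R = R \<longleftrightarrow> (\<forall>t. length t = m \<longrightarrow> (t \<in> R \<longleftrightarrow> map h t \<in> R))"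
proof
  assume "act h R = R"
  thus "\<forall>t. length t = m \<longrightarrow> (t \<in> R \<longleftrightarrow> map h t \<in> R)"
    using map_in_act[OF bij_is_inj[OF b]] by metis
next
  assume fix_tuples: "\<forall>t. length t = m \<longrightarrow> (t \<in> R \<longleftrightarrow> map h t \<in> R)"
  have inv_h: "map h (map (inv h) s) = s" for s
    using b by (simp add: map_idI bij_is_surj surj_f_inv_f)
  show "act h R = R"
  proof (intro equalityI subsetI)
    fix s assume "s \<in> act h R"
    thus "s \<in> R" using fix_tuples len by (auto simp: act_def)
  next
    fix s assume "s \<in> R"
    hence "map (inv h) s \<in> R" using fix_tuples len inv_h by (metis length_map)
    thus "s \<in> act h R" using inv_h unfolding act_def by (metis imageI)
  qed
qed

lemma length_act: "\<forall>s \<in> S. length s = n \<Longrightarrow> \<forall>t \<in> act g S. length t = n"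
  by (auto simp: act_def)

lemma same_tuples_iff:
  "\<forall>t \<in> R. length t = n \<Longrightarrow> \<forall>t \<in> S. length t = n \<Longrightarrow>
    (\<forall>t. length t = n \<longrightarrow> (t \<in> R \<longleftrightarrow> t \<in> S)) \<longleftrightarrow> R = S"
  by blast

lemma preserves_id: "preserves id q"
  by (cases q) auto

lemma preserves_comp:
  assumes g: "preserves g q" and h: "preserves h q"
  shows "preserves (g \<circ> h) q"
proof (cases q)
  case (FO n R)
  thus ?thesis using assms by (simp add: act_comp)
next
  case (SO ts Q)
  have "Rs \<in> Q \<longleftrightarrow> map (act (g \<circ> h)) Rs \<in> Q" if "typed_args ts Rs" for Rs
  proof -
    have "Rs \<in> Q \<longleftrightarrow> map (act h) Rs \<in> Q" using h that SO by simp
    also have "\<dots> \<longleftrightarrow> map (act g) (map (act h) Rs) \<in> Q" using g that SO by simp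
    finally show ?thesis by (simp add: act_comp)
  qed
  thus ?thesis using SO by simp
qed

lemma preserves_inv:
  assumes b: "bij g" and g: "preserves g q"
  shows "preserves (inv g) q"
proof (cases q)
  case (FO n R)
  thus ?thesis using g act_inv_act[OF b, of R] by simp
next
  case (SO ts Q)
  have "Rs \<in> Q \<longleftrightarrow> map (act (inv g)) Rs \<in> Q" if "typed_args ts Rs" for Rs
    using g that SO map_act_act_inv[OF b, of Rs] by simp
  thus ?thesis using SO by simp
qed

lemma id_Aut: "id \<in> Aut \<Q>"
  by (simp add: Aut_def preserves_id)

lemma Aut_subgroup: "subgroup (Aut \<Q>) (Sym :: ('a \<Rightarrow> 'a) monoid)"
proof
  show "Aut \<Q> \<subseteq> carrier Sym" by (auto simp: Aut_def carrier_Sym)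
next
  fix g h assume "g \<in> Aut \<Q>" "h \<in> Aut \<Q>"
  thus "g \<otimes>\<^bsub>Sym\<^esub> h \<in> Aut \<Q>"
    by (auto simp: Aut_def mult_Sym preserves_comp bij_comp)
next
  show "\<one>\<^bsub>Sym\<^esub> \<in> Aut \<Q>" by (simp add: Aut_def one_Sym preserves_id)
next
  fix g assume "g \<in> Aut \<Q>"
  thus "m_inv Sym g \<in> Aut \<Q>"
    by (auto simp: Aut_def inv_Sym preserves_inv bij_imp_bij_inv)
qed

section \<open>Automorphisms of the invariants: the generated subgroup\<close>

text \<open>An order isomorphism of a well-order of the whole universe onto itself is the
  identity; this is the only choice-dependent ingredient of part (2).\<close>

lemma well_order_rigid:
  assumes wo: "well_order_on UNIV r" and b: "bij f"
    and iso: "\<And>x y. (x, y) \<in> r \<longleftrightarrow> (f x, f y) \<in> r"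
  shows "f = id"
proof -
  have field: "Field r = UNIV" using wo by (metis well_order_on_Field)
  have "BNF_Wellorder_Embedding.iso r r f" using b iso field by (simp add: iso_iff2)
  hence "embed r r f" by (simp add: BNF_Wellorder_Embedding.iso_def)
  thus ?thesis using embed_unique[of r r f id] id_embed wo field by (auto simp: fun_eq_iff)
qed

definition pairs :: "('a \<times> 'a) set \<Rightarrow> 'a list set" where
  "pairs r = {[x, y] | x y. (x, y) \<in> r}"

lemma act_pairs_fixed:
  assumes "bij f" and "act f (pairs r) = pairs r"
  shows "(x, y) \<in> r \<longleftrightarrow> (f x, f y) \<in> r"
  using map_in_act[OF bij_is_inj[OF assms(1)], of "[x, y]" "pairs r"] assms(2)
  by (simp add: pairs_def)

definition orbit_rel :: "nat \<Rightarrow> ('a \<Rightarrow> 'a) set \<Rightarrow> 'a list set \<Rightarrow> 'a rel" where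
  "orbit_rel n K S = SO [n] {[act h S] | h. h \<in> K}"

lemma wf_orbit_rel: "\<forall>t \<in> S. length t = n \<Longrightarrow> wf_rel (orbit_rel n K S)"
  by (auto simp: orbit_rel_def typed_args_def act_def)

lemma typed_args_single: "typed_args [n] Rs \<longleftrightarrow> (\<exists>R. Rs = [R] \<and> (\<forall>t \<in> R. length t = n))"
  by (cases Rs) (auto simp: typed_args_def)

lemma orbit_rel_preserved:
  assumes K: "subgroup K Sym" and g: "g \<in> K"
  shows "preserves g (orbit_rel n K S)"
proof -
  have orbit_iff: "R \<in> {act h S | h. h \<in> K} \<longleftrightarrow> act g R \<in> {act h S | h. h \<in> K}" for R
  proof
    assume "R \<in> {act h S | h. h \<in> K}"
    then obtain h where h: "h \<in> K" "R = act h S" by blast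
    hence "act g R = act (g \<circ> h) S" by (simp add: act_comp)
    thus "act g R \<in> {act h S | h. h \<in> K}" using subgroup_Sym_comp[OF K g h(1)] by blast
  next
    assume "act g R \<in> {act h S | h. h \<in> K}"
    then obtain h where h: "h \<in> K" "act g R = act h S" by auto
    hence "R = act (inv g \<circ> h) S"
      using act_inv_act[OF subgroup_Sym_bij[OF K g], of R] by (simp add: act_comp)
    thus "R \<in> {act h S | h. h \<in> K}"
      using subgroup_Sym_comp[OF K subgroup_Sym_inv[OF K g] h(1)] by blast
  qed
  show ?thesis unfolding orbit_rel_def preserves.simps
  proof (intro allI impI)
    fix Rs :: "'a list set list" assume "typed_args [n] Rs"
    then obtain R where "Rs = [R]" by (auto simp: typed_args_single)
    thus "Rs \<in> {[act h S] | h. h \<in> K} \<longleftrightarrow> map (act g) Rs \<in> {[act h S] | h. h \<in> K}"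
      using orbit_iff[of R] by auto
  qed
qed

lemma orbit_rel_preservedD:
  assumes "preserves g (orbit_rel n K S)" and "id \<in> K" and "\<forall>t \<in> S. length t = n"
  shows "\<exists>h \<in> K. act g S = act h S"
proof -
  define Orb where "Orb = {[act h S] | h. h \<in> K}"
  have "typed_args [n] [S]" using assms(3) by (simp add: typed_args_single)
  moreover have "\<forall>Rs. typed_args [n] Rs \<longrightarrow> (Rs \<in> Orb \<longleftrightarrow> map (act g) Rs \<in> Orb)"
    using assms(1) by (simp add: orbit_rel_def Orb_def)
  ultimately have "[S] \<in> Orb \<longleftrightarrow> [act g S] \<in> Orb" by simp
  moreover have "[act id S] \<in> Orb" unfolding Orb_def using assms(2) by blast
  ultimately show ?thesis unfolding Orb_def by auto
qed

text \<open>Test with the orbit under K of a well-order: an automorphism g maps the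
  well-order to its image under some h in K, so inv h \<circ> g is an order automorphism,
  hence the identity.\<close>

theorem Aut_Inv_eq_generated_subgroup:
  assumes H: "H \<subseteq> carrier Sym"
  shows "Aut (Inv H) = \<Inter> {K. subgroup K Sym \<and> H \<subseteq> K}"
proof (intro equalityI subsetI InterI)
  fix g assume "g \<in> \<Inter> {K. subgroup K Sym \<and> H \<subseteq> K}"
  moreover have "H \<subseteq> Aut (Inv H)" using H by (auto simp: Aut_def Inv_def carrier_Sym)
  ultimately show "g \<in> Aut (Inv H)" using Aut_subgroup by blast
next
  fix g K assume g: "g \<in> Aut (Inv H)" and "K \<in> {K. subgroup K Sym \<and> H \<subseteq> K}"
  hence K: "subgroup K Sym" and HK: "H \<subseteq> K" by auto
  obtain r :: "('a \<times> 'a) set" where wo: "well_order_on UNIV r" using well_order_on by blast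
  have arity: "\<forall>t \<in> pairs r. length t = 2" by (auto simp: pairs_def)
  have "orbit_rel 2 K (pairs r) \<in> Inv H"
    using wf_orbit_rel[OF arity] orbit_rel_preserved[OF K] HK by (auto simp: Inv_def)
  hence bg: "bij g" and "preserves g (orbit_rel 2 K (pairs r))" using g by (auto simp: Aut_def)
  then obtain h where h: "h \<in> K" "act g (pairs r) = act h (pairs r)"
    using orbit_rel_preservedD subgroup_Sym_id[OF K] arity by blast
  have bh: "bij h" using subgroup_Sym_bij[OF K h(1)] .
  have fixed: "act (inv h \<circ> g) (pairs r) = pairs r"
    using h(2) act_inv_act[OF bh] by (simp add: act_comp)
  have bij: "bij (inv h \<circ> g)" using bg bh by (simp add: bij_comp bij_imp_bij_inv)
  have rigid: "inv h \<circ> g = id"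
    by (rule well_order_rigid[OF wo bij act_pairs_fixed[OF bij fixed]])
  have "g = (h \<circ> inv h) \<circ> g" using bij_is_surj[OF bh] by (simp add: surj_iff)
  also have "\<dots> = h" using rigid by (simp add: comp_assoc)
  finally show "g \<in> K" using h(1) by simp
qed

section \<open>Definable relations are invariant\<close>

lemma assign_Nil [simp]: "assign v [] t = v" "assign v xs [] = v"
  by (simp_all add: assign_def)

lemma assign_Cons: "assign v (x # xs) (a # t) = assign (v(x := a)) xs t"
  by (simp add: assign_def)

lemma assign_comp: "assign (g \<circ> v) xs (map g t) = g \<circ> assign v xs t"
proof (induct xs arbitrary: t v)
  case (Cons x xs)
  show ?case
  proof (cases t)
    case (Cons a t')
    have "(g \<circ> v)(x := g a) = g \<circ> v(x := a)" by (auto simp: fun_eq_iff)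
    thus ?thesis using Cons.hyps[of "v(x := a)" t'] by (simp only: \<open>t = a # t'\<close> list.map assign_Cons)
  qed simp
qed simp

lemma assign_outside: "y \<notin> set xs \<Longrightarrow> assign v xs t y = v y"
proof (induct xs arbitrary: t v)
  case (Cons x xs)
  thus ?case by (cases t) (auto simp: assign_Cons)
qed simp

lemma map_assign: "distinct xs \<Longrightarrow> length t = length xs \<Longrightarrow> map (assign v xs t) xs = t"
  by (induct xs arbitrary: t v) (auto simp: assign_Cons assign_outside length_Suc_conv)

text \<open>A variant of w on distinct variables xs is determined by its values on xs, so
  quantifying over such variants is quantifying over tuples of the length of xs.\<close>

lemma assign_variant:
  assumes "distinct xs" and "\<forall>u. u \<notin> set xs \<longrightarrow> w' u = w u"
  shows "assign w xs (map w' xs) = w'"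
proof
  fix u show "assign w xs (map w' xs) u = w' u"
  proof (cases "u \<in> set xs")
    case True
    then obtain i where "i < length xs" "xs ! i = u" by (auto simp: in_set_conv_nth)
    thus ?thesis using map_assign[OF assms(1), of "map w' xs" w] by (metis length_map nth_map)
  qed (simp add: assms(2) assign_outside)
qed

lemma all_variants_assign:
  assumes "distinct xs"
  shows "(\<forall>w'. (\<forall>u. u \<notin> set xs \<longrightarrow> w' u = w u) \<longrightarrow> P w')
         \<longleftrightarrow> (\<forall>t. length t = length xs \<longrightarrow> P (assign w xs t))"
  using assign_variant[OF assms] assign_outside by (metis length_map)

lemma ex_variant_comp:
  assumes "bij g"
  shows "(\<exists>w. (\<forall>u. u \<notin> X \<longrightarrow> w u = g (v u)) \<and> P w)
         \<longleftrightarrow> (\<exists>w. (\<forall>u. u \<notin> X \<longrightarrow> w u = v u) \<and> P (g \<circ> w))"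
proof
  assume "\<exists>w. (\<forall>u. u \<notin> X \<longrightarrow> w u = g (v u)) \<and> P w"
  then obtain w where "\<forall>u. u \<notin> X \<longrightarrow> w u = g (v u)" "P w" by blast
  moreover have "g \<circ> (inv g \<circ> w) = w"
    using bij_is_surj[OF assms] by (simp flip: comp_assoc add: surj_iff)
  ultimately show "\<exists>w. (\<forall>u. u \<notin> X \<longrightarrow> w u = v u) \<and> P (g \<circ> w)"
    using bij_is_inj[OF assms] by (intro exI[of _ "inv g \<circ> w"]) auto
next
  assume "\<exists>w. (\<forall>u. u \<notin> X \<longrightarrow> w u = v u) \<and> P (g \<circ> w)"
  then obtain w where "\<forall>u. u \<notin> X \<longrightarrow> w u = v u" "P (g \<circ> w)" by blast
  thus "\<exists>w. (\<forall>u. u \<notin> X \<longrightarrow> w u = g (v u)) \<and> P w" by (intro exI[of _ "g \<circ> w"]) auto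
qed

lemma tuples_comp:
  assumes b: "bij g" and P: "\<And>w. P (g \<circ> w) = P' w"
  shows "{t. length t = n \<and> P (assign (g \<circ> v) xs t)} = act g {t. length t = n \<and> P' (assign v xs t)}"
    (is "?L = act g ?R")
proof -
  have g_inv: "g \<circ> inv g = id" and inv_g: "inv g \<circ> g = id"
    using bij_is_surj[OF b] bij_is_inj[OF b] by (simp_all add: surj_iff)
  have shift: "P (assign (g \<circ> v) xs t) = P' (assign v xs (map (inv g) t))" for t
    using assign_comp[of g v xs "map (inv g) t"] P[of "assign v xs (map (inv g) t)"] by (simp add: g_inv)
  show ?thesis
  proof (intro equalityI subsetI)
    fix t assume "t \<in> ?L"
    hence "map (inv g) t \<in> ?R" using shift by simp
    moreover have "t = map g (map (inv g) t)" using g_inv by simp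
    ultimately show "t \<in> act g ?R" unfolding act_def by blast
  next
    fix t assume "t \<in> act g ?R"
    then obtain s where "s \<in> ?R" "t = map g s" by (auto simp: act_def)
    thus "t \<in> ?L" using shift[of t] inv_g by simp
  qed
qed

lemma sat_automorphism:
  fixes \<phi> :: "('v, 'i, 'a) fm"
  assumes "wf_fm \<Q> ar \<phi>" and g: "g \<in> Aut \<Q>"
  shows "sat (map (act g) Rs) (g \<circ> v) \<phi> = sat Rs v \<phi>"
  using assms(1)
proof (induct \<phi> arbitrary: v)
  have b: "bij g" and pres: "\<And>q. q \<in> \<Q> \<Longrightarrow> preserves g q" using g by (auto simp: Aut_def)
  have inj: "inj g" using b by (rule bij_is_inj)
  {
    case (Eq x y) show ?case by (simp add: inj_eq[OF inj])
  next
    case (Atom q xs)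
    then obtain R where q: "q = FO (length xs) R" "q \<in> \<Q>" by auto
    have "act g R = R" using pres[OF q(2)] q(1) by simp
    hence "map g (map v xs) \<in> R \<longleftrightarrow> map v xs \<in> R" using map_in_act[OF inj] by metis
    thus ?case using q(1) by (simp add: comp_def)
  next
    case (NewR j xs)
    have "map g (map v xs) \<in> act g (Rs ! j) \<longleftrightarrow> map v xs \<in> Rs ! j" by (rule map_in_act[OF inj])
    thus ?case by (cases "j < length Rs") (simp_all add: comp_def)
  next
    case (Ex X \<phi>)
    hence IH: "\<And>w. sat (map (act g) Rs) (g \<circ> w) \<phi> = sat Rs w \<phi>" by (simp add: comp_def)
    show ?case
      using ex_variant_comp[OF b, of X v "\<lambda>w. sat (map (act g) Rs) w \<phi>"] by (simp add: IH)
  next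
    case (All X \<phi>)
    hence IH: "\<And>w. sat (map (act g) Rs) (g \<circ> w) \<phi> = sat Rs w \<phi>" by (simp add: comp_def)
    have "sat (map (act g) Rs) (g \<circ> v) (All X \<phi>)
        \<longleftrightarrow> \<not> (\<exists>w. (\<forall>u. u \<notin> X \<longrightarrow> w u = g (v u)) \<and> \<not> sat (map (act g) Rs) w \<phi>)" by auto
    also have "\<dots> \<longleftrightarrow> \<not> (\<exists>w. (\<forall>u. u \<notin> X \<longrightarrow> w u = v u) \<and> \<not> sat Rs w \<phi>)"
      using ex_variant_comp[OF b, of X v "\<lambda>w. \<not> sat (map (act g) Rs) w \<phi>"] by (simp only: IH)
    finally show ?case by auto
  next
    case (GQ q xss \<phi>s)
    then obtain Q where q: "q = SO (map length xss) Q" "q \<in> \<Q>"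
      and len: "length \<phi>s = length xss" and wfs: "\<forall>\<phi> \<in> set \<phi>s. wf_fm \<Q> ar \<phi>"
      by (auto simp: Let_def)
    define args where "args Rs v = map (\<lambda>(xs, \<phi>).
      {t. length t = length xs \<and> sat Rs (assign v xs t) \<phi>}) (zip xss \<phi>s)" for Rs v
    have sat_GQ: "sat Rs v (GQ q xss \<phi>s) = (args Rs v \<in> Q)" for Rs v
      by (simp add: q(1) args_def zip_map2 comp_def split_def)
    have "{t. length t = length xs \<and> sat (map (act g) Rs) (assign (g \<circ> v) xs t) \<phi>}
          = act g {t. length t = length xs \<and> sat Rs (assign v xs t) \<phi>}"
      if "(xs, \<phi>) \<in> set (zip xss \<phi>s)" for xs \<phi>
    proof (rule tuples_comp[OF b])
      have "\<phi> \<in> set \<phi>s" using that by (rule set_zip_rightD)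
      thus "\<And>w. sat (map (act g) Rs) (g \<circ> w) \<phi> = sat Rs w \<phi>" using GQ.hyps wfs by blast
    qed
    hence "args (map (act g) Rs) (g \<circ> v) = map (act g) (args Rs v)"
      unfolding args_def map_map by (intro map_cong) auto
    moreover have "typed_args (map length xss) (args Rs v)"
      using len by (auto simp: typed_args_def args_def)
    ultimately show ?case using pres[OF q(2)] unfolding sat_GQ by (simp add: q(1))
  }
qed simp_all

lemma definable_imp_Inv:
  fixes \<phi> :: "('v, 'i, 'a) fm"
  assumes wq: "wf_rel q" and def: "definable \<Q> q \<phi>"
  shows "q \<in> Inv (Aut \<Q>)"
proof -
  have "preserves g q" if g: "g \<in> Aut \<Q>" for g
  proof (cases q)
    case (FO n R)
    from def FO obtain xs where wf: "wf_fm \<Q> [] \<phi>" and xs: "distinct xs" "length xs = n"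
      and defR: "\<And>v. sat [] v \<phi> \<longleftrightarrow> map v xs \<in> R" by auto
    have "t \<in> R \<longleftrightarrow> map g t \<in> R" if "length t = n" for t
      using sat_automorphism[OF wf g, of "[]" "assign undefined xs t"] defR that xs
      by (simp add: map_assign flip: map_map)
    moreover have "bij g" and "\<forall>t \<in> R. length t = n" using g wq FO by (auto simp: Aut_def)
    ultimately have "act g R = R" using act_fixed_iff by blast
    thus ?thesis using FO by simp
  next
    case (SO ts Q)
    from def SO have wf: "wf_fm \<Q> ts \<phi>"
      and defQ: "\<And>Rs v. typed_args ts Rs \<Longrightarrow> sat Rs v \<phi> \<longleftrightarrow> Rs \<in> Q" by auto
    have "Rs \<in> Q \<longleftrightarrow> map (act g) Rs \<in> Q" if "typed_args ts Rs" for Rs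
      using sat_automorphism[OF wf g, of Rs undefined] defQ[OF that] that
        defQ[of "map (act g) Rs"] by simp
    thus ?thesis using SO by simp
  qed
  thus ?thesis using wq by (simp add: Inv_def)
qed

section \<open>Invariant relations are definable\<close>

text \<open>The index sets of Conj and Disj live in the type 'i; any set that injects into 'i
  can index a conjunction.\<close>

definition BConj :: "('x \<Rightarrow> 'i) \<Rightarrow> 'x set \<Rightarrow> ('x \<Rightarrow> ('v, 'i, 'a) fm) \<Rightarrow> ('v, 'i, 'a) fm" where
  "BConj j A F = Conj (j ` A) (\<lambda>i. F (inv_into A j i))"

definition BDisj :: "('x \<Rightarrow> 'i) \<Rightarrow> 'x set \<Rightarrow> ('x \<Rightarrow> ('v, 'i, 'a) fm) \<Rightarrow> ('v, 'i, 'a) fm" where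
  "BDisj j A F = Disj (j ` A) (\<lambda>i. F (inv_into A j i))"

lemma sat_BConj: "inj j \<Longrightarrow> sat Rs v (BConj j A F) \<longleftrightarrow> (\<forall>x \<in> A. sat Rs v (F x))"
  by (simp add: BConj_def inv_into_f_f inj_on_subset)

lemma sat_BDisj: "inj j \<Longrightarrow> sat Rs v (BDisj j A F) \<longleftrightarrow> (\<exists>x \<in> A. sat Rs v (F x))"
  by (simp add: BDisj_def inv_into_f_f inj_on_subset)

lemma wf_BConj: "inj j \<Longrightarrow> wf_fm \<Q> ar (BConj j A F) \<longleftrightarrow> (\<forall>x \<in> A. wf_fm \<Q> ar (F x))"
  by (simp add: BConj_def inv_into_f_f inj_on_subset)

lemma wf_BDisj: "inj j \<Longrightarrow> wf_fm \<Q> ar (BDisj j A F) \<longleftrightarrow> (\<forall>x \<in> A. wf_fm \<Q> ar (F x))"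
  by (simp add: BDisj_def inv_into_f_f inj_on_subset)

text \<open>Injective codes of tuples, numbers, argument lists and relations as sets of
  relations; a set of relations injects into the index type by hypothesis.\<close>

definition code_tuple :: "'a list \<Rightarrow> 'a rel set" where "code_tuple t = {FO 0 {t}}"
definition code_nat :: "nat \<Rightarrow> 'a rel set" where "code_nat n = {FO n {}}"
definition code_args :: "'a list set list \<Rightarrow> 'a rel set" where "code_args Rs = {SO [] {Rs}}"
definition code_rel :: "'a rel \<Rightarrow> 'a rel set" where "code_rel q = {q}"

lemma inj_codes: "inj code_tuple" "inj code_nat" "inj code_args" "inj code_rel"
  by (auto simp: inj_def code_tuple_def code_nat_def code_args_def code_rel_def)

text \<open>The setting of the construction: \<iota> codes index sets, ve a is a variable naming the
  element a, and vn provides further variables distinct from these names.\<close>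

locale naming =
  fixes \<iota> :: "'a rel set \<Rightarrow> 'i" and ve :: "'a \<Rightarrow> 'v" and vn :: "nat \<Rightarrow> 'v"
  assumes inj_\<iota>: "inj \<iota>" and inj_ve: "inj ve" and inj_vn: "inj vn"
    and names_fresh: "\<And>a n. ve a \<noteq> vn n"
begin

abbreviation "jT \<equiv> \<iota> \<circ> code_tuple"
abbreviation "jN \<equiv> \<iota> \<circ> (code_nat :: nat \<Rightarrow> 'a rel set)"
abbreviation "jRs \<equiv> \<iota> \<circ> code_args"
abbreviation "jQ \<equiv> \<iota> \<circ> code_rel"
abbreviation "jP \<equiv> \<iota> \<circ> code_tuple \<circ> (\<lambda>(a, b). [a, b])"
abbreviation "jA \<equiv> \<iota> \<circ> code_tuple \<circ> (\<lambda>a. [a])"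

lemma inj_jT: "inj jT" and inj_jN: "inj jN" and inj_jRs: "inj jRs" and inj_jQ: "inj jQ"
  by (intro inj_compose inj_\<iota> inj_codes)+

lemma inj_jP: "inj jP" and inj_jA: "inj jA"
  by (intro inj_compose inj_jT; auto simp: inj_def)+

definition B :: "nat \<Rightarrow> 'v list" where "B n = map vn [0..<n]"

lemma distinct_B: "distinct (B n)"
  using inj_vn by (simp add: B_def distinct_map inj_on_def)

lemma length_B [simp]: "length (B n) = n"
  by (simp add: B_def)

lemma name_notin_B: "ve a \<notin> set (B n)"
  using names_fresh by (auto simp: B_def)

lemma assign_B_names: "assign w (B n) t \<circ> ve = w \<circ> ve"
  by (auto simp: fun_eq_iff assign_outside name_notin_B)

definition and2 :: "('v, 'i, 'a) fm \<Rightarrow> ('v, 'i, 'a) fm \<Rightarrow> ('v, 'i, 'a) fm" where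
  "and2 A C = BConj jN {0, 1} (\<lambda>n. if n = 0 then A else C)"

definition or2 :: "('v, 'i, 'a) fm \<Rightarrow> ('v, 'i, 'a) fm \<Rightarrow> ('v, 'i, 'a) fm" where
  "or2 A C = BDisj jN {0, 1} (\<lambda>n. if n = 0 then A else C)"

definition iff2 :: "('v, 'i, 'a) fm \<Rightarrow> ('v, 'i, 'a) fm \<Rightarrow> ('v, 'i, 'a) fm" where
  "iff2 A C = and2 (or2 (Neg A) C) (or2 A (Neg C))"

lemma sat_and2 [simp]: "sat Rs w (and2 A C) \<longleftrightarrow> sat Rs w A \<and> sat Rs w C"
  by (simp add: and2_def sat_BConj[OF inj_jN])

lemma sat_or2 [simp]: "sat Rs w (or2 A C) \<longleftrightarrow> sat Rs w A \<or> sat Rs w C"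
  by (simp add: or2_def sat_BDisj[OF inj_jN])

lemma sat_iff2 [simp]: "sat Rs w (iff2 A C) \<longleftrightarrow> (sat Rs w A \<longleftrightarrow> sat Rs w C)"
  by (auto simp: iff2_def)

lemma wf_and2 [simp]: "wf_fm \<Q> ar (and2 A C) \<longleftrightarrow> wf_fm \<Q> ar A \<and> wf_fm \<Q> ar C"
  by (simp add: and2_def wf_BConj[OF inj_jN])

lemma wf_iff2 [simp]: "wf_fm \<Q> ar (iff2 A C) \<longleftrightarrow> wf_fm \<Q> ar A \<and> wf_fm \<Q> ar C"
  by (auto simp: iff2_def or2_def wf_BDisj[OF inj_jN])

definition in_image :: "'v list \<Rightarrow> 'a list set \<Rightarrow> ('v, 'i, 'a) fm" where
  "in_image xs S = BDisj jT S (\<lambda>t. BConj jN {..<length t} (\<lambda>l. Eq (xs ! l) (ve (t ! l))))"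

lemma sat_in_image:
  "\<forall>t \<in> S. length t = length xs \<Longrightarrow> sat Rs w (in_image xs S) \<longleftrightarrow> map w xs \<in> act (w \<circ> ve) S"
  by (auto simp: in_image_def sat_BDisj[OF inj_jT] sat_BConj[OF inj_jN] act_def image_iff
      list_eq_iff_nth_eq)

lemma wf_in_image [simp]: "wf_fm \<Q> ar (in_image xs S)"
  by (simp add: in_image_def wf_BDisj[OF inj_jT] wf_BConj[OF inj_jN])

lemma sat_in_image_assign:
  assumes "\<forall>s \<in> S. length s = n" and "length t = n"
  shows "sat Rs (assign w (B n) t) (in_image (B n) S) \<longleftrightarrow> t \<in> act (w \<circ> ve) S"
  using assms by (simp add: sat_in_image assign_B_names map_assign distinct_B)

definition injective_fm :: "('v, 'i, 'a) fm" where
  "injective_fm = BConj jP {p. fst p \<noteq> snd p} (\<lambda>(a, b). Neg (Eq (ve a) (ve b)))"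

lemma sat_injective_fm: "sat Rs w injective_fm \<longleftrightarrow> inj (w \<circ> ve)"
  by (auto simp: injective_fm_def sat_BConj[OF inj_jP] inj_def)

definition surjective_fm :: "('v, 'i, 'a) fm" where
  "surjective_fm = All {vn 0} (BDisj jA UNIV (\<lambda>a. Eq (vn 0) (ve a)))"

lemma sat_surjective_fm: "sat Rs w surjective_fm \<longleftrightarrow> surj (w \<circ> ve)"
proof -
  have "sat Rs w surjective_fm
      \<longleftrightarrow> (\<forall>w'. (\<forall>u. u \<noteq> vn 0 \<longrightarrow> w' u = w u) \<longrightarrow> (\<exists>a. w' (vn 0) = w' (ve a)))"
    by (simp add: surjective_fm_def sat_BDisj[OF inj_jA])
  also have "\<dots> \<longleftrightarrow> (\<forall>y. \<exists>a. y = w (ve a))"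
  proof
    assume all: "\<forall>w'. (\<forall>u. u \<noteq> vn 0 \<longrightarrow> w' u = w u) \<longrightarrow> (\<exists>a. w' (vn 0) = w' (ve a))"
    show "\<forall>y. \<exists>a. y = w (ve a)"
    proof
      fix y
      obtain a where "y = (w(vn 0 := y)) (ve a)" using all[rule_format, of "w(vn 0 := y)"] by auto
      thus "\<exists>a. y = w (ve a)" using names_fresh[of a 0] by auto
    qed
  qed (metis names_fresh)
  finally show ?thesis by (auto simp: surj_def)
qed

lemma wf_injective_fm [simp]: "wf_fm \<Q> ar injective_fm"
  unfolding injective_fm_def by (subst wf_BConj[OF inj_jP]) (simp add: case_prod_beta)

lemma wf_surjective_fm [simp]: "wf_fm \<Q> ar surjective_fm"
  by (simp add: surjective_fm_def wf_BDisj[OF inj_jA])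

definition quant_fm :: "'a rel \<Rightarrow> nat list \<Rightarrow> 'a list set list \<Rightarrow> ('v, 'i, 'a) fm" where
  "quant_fm q ts Rs = GQ q (map B ts) (map2 (\<lambda>n S. in_image (B n) S) ts Rs)"

lemma tuples_in_image:
  assumes "\<forall>s \<in> S. length s = n"
  shows "{t. length t = n \<and> sat Rs (assign w (B n) t) (in_image (B n) S)} = act (w \<circ> ve) S"
  using sat_in_image_assign[OF assms] assms by (auto simp: act_def)

lemma sat_quant_fm:
  assumes ty: "typed_args ts Ss"
  shows "sat Rs w (quant_fm (SO ts Q) ts Ss) \<longleftrightarrow> map (act (w \<circ> ve)) Ss \<in> Q"
proof -
  have len: "length Ss = length ts" and ty_j: "\<And>j. j < length ts \<Longrightarrow> \<forall>s \<in> Ss ! j. length s = ts ! j"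
    using ty by (auto simp: typed_args_def)
  have "map (\<lambda>(xs, P). {t. length t = length xs \<and> P (assign w xs t)})
          (zip (map B ts) (map (\<lambda>\<phi> w. sat Rs w \<phi>) (map2 (\<lambda>n S. in_image (B n) S) ts Ss)))
        = map (act (w \<circ> ve)) Ss"
    by (rule nth_equalityI) (simp_all add: len tuples_in_image[OF ty_j])
  thus ?thesis by (simp add: quant_fm_def)
qed

definition preserves_fm :: "'a rel \<Rightarrow> ('v, 'i, 'a) fm" where
  "preserves_fm q = (case q of
      FO m R \<Rightarrow> BConj jT {t. length t = m}
        (\<lambda>t. if t \<in> R then Atom q (map ve t) else Neg (Atom q (map ve t)))
    | SO ts Q \<Rightarrow> BConj jRs {Ss. typed_args ts Ss}
        (\<lambda>Ss. if Ss \<in> Q then quant_fm q ts Ss else Neg (quant_fm q ts Ss)))"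

lemma sat_preserves_fm:
  assumes b: "bij (w \<circ> ve)" and wq: "wf_rel q"
  shows "sat Rs w (preserves_fm q) \<longleftrightarrow> preserves (w \<circ> ve) q"
proof (cases q)
  case (FO m R)
  have "sat Rs w (preserves_fm q) \<longleftrightarrow> (\<forall>t. length t = m \<longrightarrow> (t \<in> R \<longleftrightarrow> map (w \<circ> ve) t \<in> R))"
    unfolding FO preserves_fm_def by (auto simp: sat_BConj[OF inj_jT])
  also have "\<dots> \<longleftrightarrow> act (w \<circ> ve) R = R" using act_fixed_iff[OF b, of R m] wq FO by simp
  finally show ?thesis using FO by simp
next
  case (SO ts Q)
  have "sat Rs w (preserves_fm q)
      \<longleftrightarrow> (\<forall>Ss. typed_args ts Ss \<longrightarrow> (Ss \<in> Q \<longleftrightarrow> map (act (w \<circ> ve)) Ss \<in> Q))"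
    unfolding SO preserves_fm_def by (auto simp: sat_BConj[OF inj_jRs] sat_quant_fm)
  thus ?thesis using SO by simp
qed

lemma wf_preserves_fm:
  assumes "q \<in> \<Q>"
  shows "wf_fm \<Q> ar (preserves_fm q)"
proof (cases q)
  case (FO m R)
  thus ?thesis using assms by (simp add: preserves_fm_def wf_BConj[OF inj_jT])
next
  case (SO ts Q)
  have "map length (map B ts) = ts" by (simp add: map_idI)
  thus ?thesis using SO assms distinct_B
    by (auto simp: preserves_fm_def wf_BConj[OF inj_jRs] quant_fm_def Let_def set_zip
        typed_args_def)
qed

definition aut_fm :: "'a rel set \<Rightarrow> ('v, 'i, 'a) fm" where
  "aut_fm \<Q> = and2 injective_fm (and2 surjective_fm (BConj jQ \<Q> preserves_fm))"

lemma sat_aut_fm: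
  assumes "\<forall>q \<in> \<Q>. wf_rel q"
  shows "sat Rs w (aut_fm \<Q>) \<longleftrightarrow> w \<circ> ve \<in> Aut \<Q>"
  using assms sat_preserves_fm
  by (auto simp: aut_fm_def Aut_def sat_injective_fm sat_surjective_fm sat_BConj[OF inj_jQ] bij_def)

lemma wf_aut_fm [simp]: "wf_fm \<Q> ar (aut_fm \<Q>)"
  by (simp add: aut_fm_def wf_BConj[OF inj_jQ] wf_preserves_fm)

definition some_aut :: "'a rel set \<Rightarrow> ('v, 'i, 'a) fm \<Rightarrow> ('v, 'i, 'a) fm" where
  "some_aut \<Q> \<phi> = Ex (range ve) (and2 (aut_fm \<Q>) \<phi>)"

lemma sat_some_aut:
  assumes "\<forall>q \<in> \<Q>. wf_rel q"
  shows "sat Rs v (some_aut \<Q> \<phi>)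
    \<longleftrightarrow> (\<exists>w. (\<forall>u. u \<notin> range ve \<longrightarrow> w u = v u) \<and> w \<circ> ve \<in> Aut \<Q> \<and> sat Rs w \<phi>)"
  by (simp add: some_aut_def sat_aut_fm[OF assms])

definition canon :: "('v \<Rightarrow> 'a) \<Rightarrow> 'v \<Rightarrow> 'a" where
  "canon v = (\<lambda>u. if u \<in> range ve then inv ve u else v u)"

lemma canon_names: "canon v \<circ> ve = id"
  using inj_ve by (auto simp: canon_def fun_eq_iff)

lemma canon_agrees: "\<forall>u. u \<notin> range ve \<longrightarrow> canon v u = v u"
  by (simp add: canon_def)

lemma map_B_agree: "\<forall>u. u \<notin> range ve \<longrightarrow> w u = v u \<Longrightarrow> map w (B n) = map v (B n)"
  using name_notin_B by (auto simp: B_def) (metis names_fresh rangeE)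

definition define_FO :: "'a rel set \<Rightarrow> nat \<Rightarrow> 'a list set \<Rightarrow> ('v, 'i, 'a) fm" where
  "define_FO \<Q> n R = some_aut \<Q> (in_image (B n) R)"

lemma definable_FO:
  assumes Q: "\<forall>q \<in> \<Q>. wf_rel q" and wq: "wf_rel (FO n R)" and inv: "FO n R \<in> Inv (Aut \<Q>)"
  shows "definable \<Q> (FO n R) (define_FO \<Q> n R)"
proof -
  have len: "\<forall>t \<in> R. length t = length (B n)" using wq by simp
  have "sat [] v (define_FO \<Q> n R) \<longleftrightarrow> map v (B n) \<in> R" for v
  proof
    assume "sat [] v (define_FO \<Q> n R)"
    then obtain w where w: "\<forall>u. u \<notin> range ve \<longrightarrow> w u = v u" "w \<circ> ve \<in> Aut \<Q>"
      "map w (B n) \<in> act (w \<circ> ve) R"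
      by (auto simp: define_FO_def sat_some_aut[OF Q] sat_in_image[OF len])
    have "act (w \<circ> ve) R = R" using inv w(2) by (auto simp: Inv_def)
    thus "map v (B n) \<in> R" using w(3) map_B_agree[OF w(1)] by simp
  next
    assume "map v (B n) \<in> R"
    hence "map (canon v) (B n) \<in> act (canon v \<circ> ve) R"
      by (simp add: map_B_agree[OF canon_agrees] canon_names)
    thus "sat [] v (define_FO \<Q> n R)"
      unfolding define_FO_def sat_some_aut[OF Q] sat_in_image[OF len]
      using canon_agrees canon_names id_Aut by metis
  qed
  thus ?thesis using distinct_B[of n] by (auto simp: define_FO_def some_aut_def)
qed

definition coord_fm :: "nat \<Rightarrow> nat \<Rightarrow> 'a list set \<Rightarrow> ('v, 'i, 'a) fm" where
  "coord_fm j n S = All (set (B n)) (iff2 (NewR j (B n)) (in_image (B n) S))"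

lemma sat_coord_fm:
  assumes j: "j < length Rs" and Rj: "\<forall>t \<in> Rs ! j. length t = n" and S: "\<forall>s \<in> S. length s = n"
  shows "sat Rs w (coord_fm j n S) \<longleftrightarrow> Rs ! j = act (w \<circ> ve) S"
proof -
  have "sat Rs w (coord_fm j n S) \<longleftrightarrow> (\<forall>t. length t = n \<longrightarrow>
      (sat Rs (assign w (B n) t) (NewR j (B n) :: ('v, 'i, 'a) fm)
        \<longleftrightarrow> sat Rs (assign w (B n) t) (in_image (B n) S)))"
    using all_variants_assign[OF distinct_B[of n], where w = w and
        P = "\<lambda>w'. sat Rs w' (NewR j (B n) :: ('v, 'i, 'a) fm) \<longleftrightarrow> sat Rs w' (in_image (B n) S)"]
    by (simp add: coord_fm_def del: sat.simps(3))
  also have "\<dots> \<longleftrightarrow> (\<forall>t. length t = n \<longrightarrow> (t \<in> Rs ! j \<longleftrightarrow> t \<in> act (w \<circ> ve) S))"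
    using j sat_in_image_assign[OF S] by (simp add: map_assign distinct_B)
  also have "\<dots> \<longleftrightarrow> Rs ! j = act (w \<circ> ve) S"
    by (rule same_tuples_iff[OF Rj length_act[OF S]])
  finally show ?thesis .
qed

definition args_fm :: "nat list \<Rightarrow> 'a list set list \<Rightarrow> ('v, 'i, 'a) fm" where
  "args_fm ts Ss = BConj jN {..<length ts} (\<lambda>j. coord_fm j (ts ! j) (Ss ! j))"

lemma sat_args_fm:
  assumes "typed_args ts Rs" and "typed_args ts Ss"
  shows "sat Rs w (args_fm ts Ss) \<longleftrightarrow> Rs = map (act (w \<circ> ve)) Ss"
  using assms by (auto simp: args_fm_def sat_BConj[OF inj_jN] sat_coord_fm typed_args_def
      list_eq_iff_nth_eq)

definition define_SO :: "'a rel set \<Rightarrow> nat list \<Rightarrow> 'a list set list set \<Rightarrow> ('v, 'i, 'a) fm" where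
  "define_SO \<Q> ts Q = some_aut \<Q> (BDisj jRs Q (args_fm ts))"

lemma definable_SO:
  assumes Q: "\<forall>q \<in> \<Q>. wf_rel q" and wq: "wf_rel (SO ts Q)" and inv: "SO ts Q \<in> Inv (Aut \<Q>)"
  shows "definable \<Q> (SO ts Q) (define_SO \<Q> ts Q)"
proof -
  have tyQ: "\<And>Ss. Ss \<in> Q \<Longrightarrow> typed_args ts Ss" using wq by simp
  have "sat Rs v (define_SO \<Q> ts Q) \<longleftrightarrow> Rs \<in> Q" if ty: "typed_args ts Rs" for Rs v
  proof
    assume "sat Rs v (define_SO \<Q> ts Q)"
    then obtain w Ss where w: "w \<circ> ve \<in> Aut \<Q>" "Ss \<in> Q" "Rs = map (act (w \<circ> ve)) Ss"
      by (auto simp: define_SO_def sat_some_aut[OF Q] sat_BDisj[OF inj_jRs] sat_args_fm[OF ty tyQ])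
    have "preserves (w \<circ> ve) (SO ts Q)" using inv w(1) by (auto simp: Inv_def)
    hence "Ss \<in> Q \<longleftrightarrow> map (act (w \<circ> ve)) Ss \<in> Q" using tyQ[OF w(2)] by simp
    thus "Rs \<in> Q" using w(2,3) by simp
  next
    assume "Rs \<in> Q"
    thus "sat Rs v (define_SO \<Q> ts Q)"
      unfolding define_SO_def sat_some_aut[OF Q] sat_BDisj[OF inj_jRs]
      using canon_agrees[of v] canon_names[of v] id_Aut
      by (intro exI[of _ "canon v"]) (auto simp: sat_args_fm[OF ty tyQ])
  qed
  thus ?thesis by (simp add: define_SO_def some_aut_def wf_BDisj[OF inj_jRs] args_fm_def
      wf_BConj[OF inj_jN] coord_fm_def)
qed

end

lemma naming_exists:
  assumes "\<exists>f :: 'a rel set \<Rightarrow> 'v. inj f" and "\<exists>f :: 'a rel set \<Rightarrow> 'i. inj f"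
  shows "\<exists>(\<iota> :: 'a rel set \<Rightarrow> 'i) (ve :: 'a \<Rightarrow> 'v) vn. naming \<iota> ve vn"
proof -
  obtain fv :: "'a rel set \<Rightarrow> 'v" and \<iota> :: "'a rel set \<Rightarrow> 'i" where "inj fv" "inj \<iota>"
    using assms by blast
  hence "naming \<iota> (\<lambda>a. fv {FO 1 {[a]}}) (\<lambda>n. fv {FO (Suc (Suc n)) {}})"
    by unfold_locales (auto simp: inj_def dest: injD)
  thus ?thesis by blast
qed

theorem Inv_Aut_iff_definable:
  fixes \<Q> :: "'a rel set" and q :: "'a rel"
  assumes Q: "\<forall>q \<in> \<Q>. wf_rel q" and wq: "wf_rel q"
    and "\<exists>f :: 'a rel set \<Rightarrow> 'v. inj f" and "\<exists>f :: 'a rel set \<Rightarrow> 'i. inj f"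
  shows "q \<in> Inv (Aut \<Q>) \<longleftrightarrow> L_inf_definable TYPE('v) TYPE('i) \<Q> q"
proof
  assume inv: "q \<in> Inv (Aut \<Q>)"
  obtain \<iota> :: "'a rel set \<Rightarrow> 'i" and ve :: "'a \<Rightarrow> 'v" and vn where "naming \<iota> ve vn"
    using naming_exists assms(3,4) by blast
  then interpret naming \<iota> ve vn .
  show "L_inf_definable TYPE('v) TYPE('i) \<Q> q"
    unfolding L_inf_definable_def
  proof (cases q)
    case (FO n R)
    thus "\<exists>\<phi> :: ('v, 'i, 'a) fm. definable \<Q> q \<phi>" using definable_FO[OF Q] wq inv by blast
  next
    case (SO ts Q)
    thus "\<exists>\<phi> :: ('v, 'i, 'a) fm. definable \<Q> q \<phi>" using definable_SO[OF Q] wq inv by blast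
  qed
next
  assume "L_inf_definable TYPE('v) TYPE('i) \<Q> q"
  then obtain \<phi> :: "('v, 'i, 'a) fm" where "definable \<Q> q \<phi>"
    by (auto simp: L_inf_definable_def)
  thus "q \<in> Inv (Aut \<Q>)" using definable_imp_Inv wq by blast
qed

theorem theorem2:
  fixes \<Q> :: "'a rel set" and H :: "('a \<Rightarrow> 'a) set"
  assumes Q_wf: "\<forall>q \<in> \<Q>. wf_rel q"
    and H_perm: "H \<subseteq> carrier Sym"
    and vars_large: "\<exists>f :: 'a rel set \<Rightarrow> 'v. inj f"
    and index_large: "\<exists>f :: 'a rel set \<Rightarrow> 'i. inj f"
  shows "(\<forall>q. wf_rel q \<longrightarrow>
            (q \<in> Inv (Aut \<Q>) \<longleftrightarrow> L_inf_definable TYPE('v) TYPE('i) \<Q> q))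
         \<and> Aut (Inv H) = \<Inter> {K. subgroup K Sym \<and> H \<subseteq> K}"
  using Inv_Aut_iff_definable[OF Q_wf _ vars_large index_large]
    Aut_Inv_eq_generated_subgroup[OF H_perm] by blast

end
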